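(* Let $k$ and $N$ be positive integers and let $\varepsilon=\varepsilon(k,N)\in(0,1/2]$. Set $\kappa=\lfloor 1/\varepsilon\rfloor+1$ and $$V(k)=\max\Big\{\frac{\kappa^{2k-2}}{2}\Big(\varepsilon-\frac1\kappa\Big)^{-1},\ \kappa^{k-1}+\varepsilon\Big\}.$$ If $n_1,\ldots,n_k$ are nonnegative integers with $n_1<n_2<\cdots<n_k\le N$ and $n_k\ge V(k)$, then there exists an integer $$d\in\Big(\frac{n_k}{\kappa^{k-1}+\varepsilon},\ \frac{n_k}{1-\varepsilon}\Big)$$ such that $n_j \bmod d \in[0,\varepsilon d)\cup((1-\varepsilon)d,d)$ for every $j\in\{1,\ldots,k\}$.
   Context: For an integer $n$ and positive integer $d$, $n\bmod d$ denotes the unique $a\in\{0,1,\ldots,d-1\}$ with $n\equiv a\pmod d$. *)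

theory Defs
  imports Complex_Main
begin

definition kappa :: "real \<Rightarrow> nat" where
  "kappa \<epsilon> = nat \<lfloor>1 / \<epsilon>\<rfloor> + 1"

definition V :: "real \<Rightarrow> nat \<Rightarrow> real" where
  "V \<epsilon> k = max ((real (kappa \<epsilon>) ^ (2*k - 2) / 2) * inverse (\<epsilon> - 1 / real (kappa \<epsilon>)))
                   (real (kappa \<epsilon>) ^ (k - 1) + \<epsilon>)"

end

theory Submission
  imports Defs "HOL-Library.FuncSet"
begin

text \<open>
  By the pigeonhole principle there is \<open>1 \<le> m \<le> \<kappa>\<^sup>k\<^sup>-\<^sup>1\<close> such that every \<open>m n\<^sub>j / n\<^sub>k\<close> lies
  within \<open>1/\<kappa>\<close> of an integer \<open>p\<^sub>j\<close>. Let \<open>d\<close> be \<open>n\<^sub>k / m\<close> rounded to the nearest integer, so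
  \<open>n\<^sub>k = m d + r\<close> with \<open>|r| \<le> m/2\<close>; the hypothesis \<open>n\<^sub>k \<ge> V(k)\<close> makes \<open>|r| \<le> (\<epsilon> - 1/\<kappa>) d\<close>.
  Then \<open>n\<^sub>j = d (p\<^sub>j + u\<^sub>j)\<close> with \<open>|u\<^sub>j| < 1/\<kappa> + (\<epsilon> - 1/\<kappa>) = \<epsilon>\<close>, so every \<open>n\<^sub>j\<close> lies within
  \<open>\<epsilon> d\<close> of a multiple of \<open>d\<close>.
\<close>

definition near_multiple :: "real \<Rightarrow> int \<Rightarrow> int \<Rightarrow> bool" where
  "near_multiple \<epsilon> d a \<longleftrightarrow>
     (0 \<le> real_of_int (a mod d) \<and> real_of_int (a mod d) < \<epsilon> * d)
   \<or> ((1 - \<epsilon>) * d < real_of_int (a mod d) \<and> real_of_int (a mod d) < d)"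

lemma mod_eq_of_remainder_bounds:
  fixes a d q :: int
  assumes "0 \<le> a - d * q" and "a - d * q < d"
  shows "a mod d = a - d * q"
  using assms by (metis diff_add_cancel mod_mult_self2 mod_pos_pos_trivial)

lemma near_multiple_of_offset:
  fixes a d p :: int and u \<epsilon> :: real
  assumes "d > 0" and a: "real_of_int a = d * (p + u)" and "\<bar>u\<bar> < \<epsilon>" and "\<epsilon> \<le> 1/2"
  shows "near_multiple \<epsilon> d a"
proof -
  have d: "real_of_int d > 0" using assms(1) by simp
  show ?thesis
  proof (cases "u \<ge> 0")
    case True
    have r: "real_of_int (a - d * p) = d * u" using a by (simp add: algebra_simps)
    have "0 \<le> d * u" "d * u < d" "d * u < \<epsilon> * d"
      using True assms(3,4) d by (simp_all add: mult.commute)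
    moreover from this have "a mod d = a - d * p"
      using r by (intro mod_eq_of_remainder_bounds) linarith+
    ultimately show ?thesis unfolding near_multiple_def using r by simp
  next
    case False
    have r: "real_of_int (a - d * (p - 1)) = d * (1 + u)" using a by (simp add: algebra_simps)
    have "0 < d * (1 + u)" "d * (1 + u) < d" "(1 - \<epsilon>) * d < d * (1 + u)"
      using False assms(3,4) d by (simp_all add: mult.commute)
    moreover from this have "a mod d = a - d * (p - 1)"
      using r by (intro mod_eq_of_remainder_bounds) linarith+
    ultimately show ?thesis unfolding near_multiple_def using r by simp
  qed
qed

lemma floor_mult_eq_imp_dist_less:
  fixes x y K :: real
  assumes "K > 0" and "\<lfloor>K * x\<rfloor> = \<lfloor>K * y\<rfloor>"
  shows "\<bar>x - y\<bar> < 1 / K"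
proof -
  have "\<bar>K * x - K * y\<bar> < 1"
    using of_int_floor_le[of "K * x"] of_int_floor_le[of "K * y"] assms(2)
      real_of_int_floor_add_one_gt[of "K * x"] real_of_int_floor_add_one_gt[of "K * y"]
    by linarith
  then have "K * \<bar>x - y\<bar> < 1" using assms(1) by (simp add: abs_mult flip: right_diff_distrib)
  then show ?thesis using assms(1) by (simp add: field_simps)
qed

text \<open>Dirichlet's simultaneous approximation theorem, by pigeonholing the fractional parts
  of \<open>i \<alpha>\<^sub>j\<close>, \<open>0 \<le> i \<le> K\<^sup>L\<close>, into \<open>K\<^sup>L\<close> boxes of side \<open>1/K\<close>.\<close>

lemma simultaneous_dirichlet_approximation:
  fixes K L :: nat and \<alpha> :: "'a \<Rightarrow> real" and A :: "'a set"
  assumes "K \<ge> 1" and "finite A" and "card A = L"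
  shows "\<exists>m::nat. 1 \<le> m \<and> m \<le> K ^ L \<and> (\<forall>j\<in>A. \<exists>p::int. \<bar>m * \<alpha> j - p\<bar> < 1 / K)"
proof -
  define box where "box i = restrict (\<lambda>j. nat \<lfloor>K * frac (i * \<alpha> j)\<rfloor>) A" for i :: nat
  have box_range: "box ` {0..K ^ L} \<subseteq> PiE A (\<lambda>_. {..<K})"
  proof -
    have "nat \<lfloor>K * frac (i * \<alpha> j)\<rfloor> < K" for i :: nat and j
      using frac_lt_1[of "i * \<alpha> j"] assms(1) by (simp add: floor_less_iff nat_less_iff)
    then show ?thesis unfolding box_def by auto
  qed
  have "\<not> inj_on box {0..K ^ L}"
  proof
    assume "inj_on box {0..K ^ L}"
    then have "card (box ` {0..K ^ L}) = K ^ L + 1" by (simp add: card_image)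
    moreover have "card (box ` {0..K ^ L}) \<le> K ^ L"
      using card_mono[OF finite_PiE box_range] assms(2,3) by (simp add: card_PiE)
    ultimately show False by simp
  qed
  then obtain i i' where i: "i \<in> {0..K ^ L}" "i' \<in> {0..K ^ L}" "i \<noteq> i'" "box i = box i'"
    by (auto simp: inj_on_def)
  obtain a b where ab: "a < b" "b \<le> K ^ L" "box a = box b"
  proof (cases "i < i'")
    case True then show ?thesis using i that by auto
  next
    case False then show ?thesis using i that[of i' i] by auto
  qed
  have "\<exists>p::int. \<bar>real (b - a) * \<alpha> j - p\<bar> < 1 / K" if j: "j \<in> A" for j
  proof -
    have "nat \<lfloor>K * frac (a * \<alpha> j)\<rfloor> = nat \<lfloor>K * frac (b * \<alpha> j)\<rfloor>"
    proof -
      have "box a j = box b j" using ab(3) by simp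
      then show ?thesis using j unfolding box_def by simp
    qed
    moreover have "\<lfloor>K * frac (a * \<alpha> j)\<rfloor> \<ge> 0" "\<lfloor>K * frac (b * \<alpha> j)\<rfloor> \<ge> 0"
      by (simp_all add: frac_ge_0)
    ultimately have "\<lfloor>K * frac (b * \<alpha> j)\<rfloor> = \<lfloor>K * frac (a * \<alpha> j)\<rfloor>"
      by (metis eq_nat_nat_iff)
    then have "\<bar>frac (b * \<alpha> j) - frac (a * \<alpha> j)\<bar> < 1 / K"
      using floor_mult_eq_imp_dist_less[of "real K"] assms(1) by simp
    moreover have "real (b - a) * \<alpha> j - of_int (\<lfloor>b * \<alpha> j\<rfloor> - \<lfloor>a * \<alpha> j\<rfloor>)
        = frac (b * \<alpha> j) - frac (a * \<alpha> j)"
      using ab(1) unfolding frac_def by (simp add: algebra_simps)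
    ultimately show ?thesis by metis
  qed
  then show ?thesis using ab by (intro exI[of _ "b - a"]) auto
qed

lemma nearest_multiple_decomposition:
  fixes n m :: int
  assumes "m > 0"
  obtains d where "- m \<le> 2 * (n - m * d)" and "2 * (n - m * d) < m"
proof
  define d where "d = (2 * n + m) div (2 * m)"
  have "2 * n + m = 2 * m * d + (2 * n + m) mod (2 * m)"
    unfolding d_def by simp
  moreover have "0 \<le> (2 * n + m) mod (2 * m)" "(2 * n + m) mod (2 * m) < 2 * m"
    using assms by simp_all
  ultimately show "- m \<le> 2 * (n - m * d)" "2 * (n - m * d) < m"
    by (simp_all add: algebra_simps)
qed

text \<open>The strict upper bound \<open>2 r < m\<close>, i.e. \<open>2 r \<le> m - 1\<close>, is what makes the case \<open>r > 0\<close>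
  work.\<close>

lemma rounding_remainder_bound:
  fixes m d r :: int and \<eta> :: real
  assumes "m \<ge> 1" and "0 < \<eta>" and "\<eta> < 1"
    and "- m \<le> 2 * r" and "2 * r < m"
    and big: "real_of_int m ^ 2 \<le> 2 * \<eta> * (m * d + r)"
  shows "d > 0" and "\<bar>r\<bar> \<le> \<eta> * d"
proof -
  have m: "real_of_int m \<ge> 1" using assms(1) by simp
  have r: "- real_of_int m \<le> 2 * r" "2 * real_of_int r \<le> real_of_int m - 1"
    using assms(4,5) by linarith+
  have m2: "real_of_int m ^ 2 = m * m" by (simp add: power2_eq_square)
  have "real_of_int m \<le> m * m" using m by simp
  have "0 < real_of_int m ^ 2" using m by simp
  then have "0 < 2 * \<eta> * (m * d + r)" using big by linarith
  then have n: "0 < real_of_int (m * d + r)" using \<open>0 < \<eta>\<close> by (simp add: zero_less_mult_iff)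
  have "2 * \<eta> * (m * d + r) < 2 * (m * d + r)"
    using mult_strict_right_mono[OF \<open>\<eta> < 1\<close> n] by simp
  then have "m < 2 * real_of_int (m * d + r)" using big m2 \<open>real_of_int m \<le> m * m\<close> by linarith
  then show "d > 0"
  proof (rule contrapos_pp)
    assume "\<not> d > 0"
    then have "real_of_int m * d \<le> 0" using assms(1) by (simp add: mult_nonneg_nonpos)
    then show "\<not> m < 2 * real_of_int (m * d + r)" using r by simp
  qed
  show "\<bar>r\<bar> \<le> \<eta> * d"
  proof (cases "r \<le> 0")
    case True
    have "2 * \<eta> * r \<le> 0" using True \<open>0 < \<eta>\<close> by (simp add: mult_nonneg_nonpos)
    then have "real_of_int m * m \<le> real_of_int m * (2 * \<eta> * d)"
      using big m2 by (simp add: algebra_simps)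
    then have "real_of_int m \<le> 2 * \<eta> * d" using m by simp
    then show ?thesis using True r by simp
  next
    case False
    have "\<eta> * m \<le> m" using \<open>\<eta> < 1\<close> m by simp
    then have "(m - 1) * (m + \<eta>) \<le> real_of_int m * m"
      using \<open>0 < \<eta>\<close> by (simp add: algebra_simps)
    moreover have "2 * r * (m + \<eta>) \<le> (m - 1) * (m + \<eta>)"
      using r \<open>0 < \<eta>\<close> m by (intro mult_right_mono) simp_all
    ultimately have "real_of_int m * r \<le> real_of_int m * (\<eta> * d)"
      using big m2 by (simp add: algebra_simps)
    then show ?thesis using False m by simp
  qed
qed

lemma near_multiple_of_approximation:
  fixes a d m n p r :: int and \<eta> \<epsilon> K :: real
  assumes "d > 0" and n: "n = m * d + r" and "\<bar>r\<bar> \<le> \<eta> * d"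
    and "0 \<le> a" and "a \<le> n" and "n > 0"
    and approx: "\<bar>m * (a / n) - p\<bar> < 1 / K" and "1 / K + \<eta> \<le> \<epsilon>" and "\<epsilon> \<le> 1/2"
  shows "near_multiple \<epsilon> d a"
proof -
  have d: "real_of_int d > 0" and n_pos: "real_of_int n > 0" using assms(1,6) by simp_all
  define u where "u = (m * (a / n) - p) + a * r / (d * n)"
  have "d * (p + u) = a * (m * d + r) / n"
    using d n_pos unfolding u_def by (simp add: field_simps)
  then have "real_of_int a = d * (p + u)" using n_pos unfolding n by simp
  moreover have "\<bar>u\<bar> < \<epsilon>"
  proof -
    have "\<bar>a * r / (d * n)\<bar> = (a / n) * (\<bar>r\<bar> / d)"
      using d n_pos \<open>0 \<le> a\<close> by (simp add: abs_mult)
    also have "\<dots> \<le> 1 * (\<bar>r\<bar> / d)"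
      using assms(4,5) d n_pos by (intro mult_right_mono) simp_all
    also have "\<dots> \<le> \<eta>" using assms(3) d by (simp add: field_simps)
    finally show ?thesis using approx assms(8) unfolding u_def by linarith
  qed
  ultimately show ?thesis using near_multiple_of_offset assms(1,9) by blast
qed

lemma quotient_bounds_of_rounding:
  fixes d m r :: int and n M \<eta> \<epsilon> :: real
  assumes "d > 0" and "1 \<le> m" and "m \<le> M" and n: "n = m * d + r" and r: "\<bar>r\<bar> \<le> \<eta> * d"
    and "\<eta> < \<epsilon>" and "\<epsilon> < 1"
  shows "n / (M + \<epsilon>) < d" and "d < n / (1 - \<epsilon>)"
proof -
  have d: "real_of_int d > 0" using assms(1) by simp
  have "0 \<le> \<eta> * d" using r by linarith
  then have "0 < M + \<epsilon>" using d assms(2,3,6) by (simp add: zero_le_mult_iff)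
  have "n \<le> d * (m + \<eta>)" using n abs_le_D1[of "real_of_int r"] r by (simp add: algebra_simps)
  also have "\<dots> < d * (M + \<epsilon>)"
    using d assms(3,6) by (intro mult_strict_left_mono add_le_less_mono) simp_all
  finally show "n / (M + \<epsilon>) < d" using \<open>0 < M + \<epsilon>\<close> by (simp add: divide_less_eq mult.commute)
  have "d * (1 - \<epsilon>) < d * (m - \<eta>)" using d assms(2,6) by (intro mult_strict_left_mono) auto
  also have "\<dots> \<le> n" using n abs_le_D2[of "real_of_int r"] r by (simp add: algebra_simps)
  finally show "d < n / (1 - \<epsilon>)" using assms(7) by (simp add: less_divide_eq)
qed

lemma common_near_divisor:
  fixes n :: "'a \<Rightarrow> nat" and A :: "'a set" and K L n\<^sub>0 :: nat and \<epsilon> :: real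
  assumes "K \<ge> 1" and "1 / K < \<epsilon>" and "\<epsilon> \<le> 1/2"
    and "finite A" and "card A = L" and "\<forall>j\<in>A. n j \<le> n\<^sub>0"
    and big: "(real K ^ L) ^ 2 \<le> 2 * (\<epsilon> - 1 / K) * n\<^sub>0"
  shows "\<exists>d::int. n\<^sub>0 / (real K ^ L + \<epsilon>) < d \<and> d < n\<^sub>0 / (1 - \<epsilon>)
           \<and> near_multiple \<epsilon> d n\<^sub>0 \<and> (\<forall>j\<in>A. near_multiple \<epsilon> d (n j))"
proof -
  define \<eta> where "\<eta> = \<epsilon> - 1 / K"
  have "0 < 1 / real K" using assms(1) by simp
  then have \<eta>: "0 < \<eta>" "\<eta> < \<epsilon>" "\<eta> < 1" using assms(2,3) unfolding \<eta>_def by linarith+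
  obtain m :: nat where m: "1 \<le> m" "m \<le> K ^ L"
    and approx: "\<forall>j\<in>A. \<exists>p::int. \<bar>m * (n j / n\<^sub>0) - p\<bar> < 1 / K"
    using simultaneous_dirichlet_approximation[OF assms(1,4,5), of "\<lambda>j. n j / n\<^sub>0"] by blast
  have mK: "real m \<le> real K ^ L" using m(2) by (metis of_nat_le_iff of_nat_power)
  obtain d :: int where rd: "- int m \<le> 2 * (int n\<^sub>0 - int m * d)" "2 * (int n\<^sub>0 - int m * d) < int m"
    using nearest_multiple_decomposition[of "int m" "int n\<^sub>0"] m(1) by auto
  define r where "r = int n\<^sub>0 - m * d"
  have n\<^sub>0: "real n\<^sub>0 = m * d + r" unfolding r_def by simp
  have "real m ^ 2 \<le> (real K ^ L) ^ 2" using mK by (simp add: power_mono)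
  then have "real m ^ 2 \<le> 2 * \<eta> * n\<^sub>0" using big unfolding \<eta>_def by linarith
  then have "real_of_int (int m) ^ 2 \<le> 2 * \<eta> * (int m * d + r)" using n\<^sub>0 by simp
  moreover have "- int m \<le> 2 * r" "2 * r < int m" using rd unfolding r_def by simp_all
  ultimately have d: "d > 0" and r: "\<bar>r\<bar> \<le> \<eta> * d"
    using rounding_remainder_bound[of "int m" \<eta> r d] m(1) \<eta>(1,3) by simp_all
  have "int m \<le> int m * d" using d by (simp add: mult_le_cancel_left1)
  moreover have "1 \<le> int m" using m(1) by simp
  ultimately have "int n\<^sub>0 > 0" using rd by arith
  have near: "near_multiple \<epsilon> d a" if "a \<le> n\<^sub>0" "\<bar>m * (a / n\<^sub>0) - p\<bar> < 1 / K" for a :: nat and p :: int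
  proof (rule near_multiple_of_approximation[OF d _ r])
    show "int n\<^sub>0 = int m * d + r" unfolding r_def by simp
    show "\<bar>real_of_int (int m) * (real_of_int (int a) / int n\<^sub>0) - p\<bar> < 1 / K" using that(2) by simp
    show "1 / real K + \<eta> \<le> \<epsilon>" unfolding \<eta>_def by simp
  qed (use that(1) \<open>int n\<^sub>0 > 0\<close> assms(3) in simp_all)
  have "near_multiple \<epsilon> d n\<^sub>0"
    using near[of n\<^sub>0 m] \<open>int n\<^sub>0 > 0\<close> assms(1) by simp
  moreover have "\<forall>j\<in>A. near_multiple \<epsilon> d (n j)"
    using approx near assms(6) by blast
  moreover have "n\<^sub>0 / (real K ^ L + \<epsilon>) < d" "d < n\<^sub>0 / (1 - \<epsilon>)"
    using quotient_bounds_of_rounding[of d "int m" "real K ^ L" n\<^sub>0 r \<eta> \<epsilon>] d m(1) mK n\<^sub>0 r \<eta>(2) assms(3)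
    by simp_all
  ultimately show ?thesis by blast
qed

lemma inverse_kappa_less:
  assumes "0 < \<epsilon>"
  shows "1 / real (kappa \<epsilon>) < \<epsilon>"
proof -
  have "0 \<le> \<lfloor>1 / \<epsilon>\<rfloor>" using assms by simp
  then have "real (kappa \<epsilon>) = \<lfloor>1 / \<epsilon>\<rfloor> + 1" unfolding kappa_def by simp
  then have "1 / \<epsilon> < real (kappa \<epsilon>)" using real_of_int_floor_add_one_gt[of "1 / \<epsilon>"] by linarith
  moreover have "0 < real (kappa \<epsilon>)" unfolding kappa_def by simp
  ultimately show ?thesis using assms by (simp add: field_simps)
qed

theorem lemma3:
  fixes k N :: nat and \<epsilon> :: real and n :: "nat \<Rightarrow> nat"
  assumes "k \<ge> 1" and "N \<ge> 1"
    and "0 < \<epsilon>" and "\<epsilon> \<le> 1/2"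
    and "\<And>i j. 1 \<le> i \<Longrightarrow> i < j \<Longrightarrow> j \<le> k \<Longrightarrow> n i < n j"
    and "n k \<le> N"
    and "real (n k) \<ge> V \<epsilon> k"
  shows "\<exists>d::int. real (n k) / (real (kappa \<epsilon>) ^ (k - 1) + \<epsilon>) < real_of_int d
            \<and> real_of_int d < real (n k) / (1 - \<epsilon>)
            \<and> (\<forall>j \<in> {1..k}.
                 (0 \<le> real_of_int (int (n j) mod d) \<and> real_of_int (int (n j) mod d) < \<epsilon> * d)
               \<or> ((1 - \<epsilon>) * d < real_of_int (int (n j) mod d) \<and> real_of_int (int (n j) mod d) < d))"
proof -
  define K where "K = kappa \<epsilon>"
  have K: "K \<ge> 1" "1 / real K < \<epsilon>"
    using inverse_kappa_less[OF assms(3)] unfolding K_def kappa_def by simp_all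
  have below: "\<forall>j\<in>{1..<k}. n j \<le> n k" using assms(5) by (simp add: less_imp_le)
  have "real K ^ (2 * k - 2) / 2 * inverse (\<epsilon> - 1 / K) \<le> n k"
    using assms(7) unfolding V_def K_def by (metis max.bounded_iff)
  then have "real K ^ (2 * k - 2) \<le> 2 * (\<epsilon> - 1 / K) * n k"
    using K(2) by (simp add: field_simps)
  moreover have "real K ^ (2 * k - 2) = (real K ^ (k - 1)) ^ 2"
    by (simp add: power_mult[symmetric] mult.commute right_diff_distrib')
  ultimately obtain d :: int where "n k / (real K ^ (k - 1) + \<epsilon>) < d" "d < n k / (1 - \<epsilon>)"
      and "near_multiple \<epsilon> d (n k)" "\<forall>j\<in>{1..<k}. near_multiple \<epsilon> d (n j)"
    using common_near_divisor[OF K assms(4) finite_atLeastLessThan _ below] by auto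
  moreover have "{1..k} = insert k {1..<k}" using assms(1) by auto
  ultimately show ?thesis unfolding near_multiple_def K_def by auto
qed

end
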